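(* Let $G$ be a countable discrete group acting minimally by homeomorphisms on a compact Hausdorff space $X$, and fix $x\in X$. There is a net $(\mu_\lambda)\subseteq P_f(G,C(X))$ such that for every $\nu\in P(X)$, $\nu\mu_\lambda\to\delta_x$ in the weak* topology.
   Context: Minimal means every orbit is dense; $(g\cdot f)(y)=f(g^{-1}y)$ on $C(X)$. $P(X)$ is the set of regular Borel probability measures on $X$, identified with states on $C(X)$. A generalized $(G,C(X))$-probability measure is a formal sum $\mu=\sum_{i\in I}f_is_if_i$ with $I$ an index set, $s_i\in G$ (repetitions allowed), $f_i\in C(X)$, $f_i\ge0$, $f_i\ne0$, $\sum_if_i^2=1$; $P_f(G,C(X))$ is the set of these with $I$ finite. For $h\in C(X)$, $\mu h=\sum_if_i^2(s_i\cdot h)$, and $(\nu\mu)(h)=\nu(\mu h)$. *)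

theory Defs
  imports "HOL-Analysis.Analysis" "HOL-Probability.Probability" "HOL-Algebra.Group_Action"
begin

definition fun_act :: "('g, 'm) monoid_scheme \<Rightarrow> ('g \<Rightarrow> 'a \<Rightarrow> 'a) \<Rightarrow> 'g \<Rightarrow> ('a \<Rightarrow> real) \<Rightarrow> 'a \<Rightarrow> real"
  where "fun_act G \<phi> g f = (\<lambda>y. f (\<phi> (inv\<^bsub>G\<^esub> g) y))"

text \<open>A finite generalized (G,C(X))-probability measure, given as a finite list of
  terms (s_i, f_i) of the formal sum  sum_i f_i s_i f_i.\<close>
definition Pf :: "('g, 'm) monoid_scheme \<Rightarrow> (('g \<times> ('a::topological_space \<Rightarrow> real)) list) set"
  where "Pf G = {\<mu>. (\<forall>(s, f) \<in> set \<mu>. s \<in> carrier G \<and> continuous_on UNIV f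
                        \<and> (\<forall>y. f y \<ge> 0) \<and> f \<noteq> (\<lambda>_. 0))
                 \<and> (\<lambda>y. \<Sum>(s, f) \<leftarrow> \<mu>. (f y)\<^sup>2) = (\<lambda>_. 1)}"

definition gen_apply :: "('g, 'm) monoid_scheme \<Rightarrow> ('g \<Rightarrow> 'a \<Rightarrow> 'a) \<Rightarrow> ('g \<times> ('a \<Rightarrow> real)) list
    \<Rightarrow> ('a \<Rightarrow> real) \<Rightarrow> 'a \<Rightarrow> real"
  where "gen_apply G \<phi> \<mu> h = (\<lambda>y. \<Sum>(s, f) \<leftarrow> \<mu>. (f y)\<^sup>2 * fun_act G \<phi> s h y)"

definition regular_borel_prob :: "'a::topological_space measure \<Rightarrow> bool"
  where "regular_borel_prob \<nu> \<longleftrightarrow> prob_space \<nu> \<and> sets \<nu> = sets borel \<and>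
     (\<forall>A \<in> sets borel.
        emeasure \<nu> A = (SUP K \<in> {K. compact K \<and> K \<subseteq> A}. emeasure \<nu> K) \<and>
        emeasure \<nu> A = (INF U \<in> {U. open U \<and> A \<subseteq> U}. emeasure \<nu> U))"

definition minimal_action :: "('g, 'm) monoid_scheme \<Rightarrow> ('g \<Rightarrow> 'a::topological_space \<Rightarrow> 'a) \<Rightarrow> bool"
  where "minimal_action G \<phi> \<longleftrightarrow> (\<forall>y. closure (orbit G \<phi> y) = UNIV)"

end

theory Submission
  imports Defs
begin

text \<open>Every point y is moved by some g_y into a small neighbourhood U of x, so the sets
  V_y = g_y^-1 U form an open cover of X. A square-root partition of unity (f_y^2) subordinate
  to a finite subcover gives the measure \<mu> = \<Sum> f_y g_y^-1 f_y, and \<mu>h is then a pointwise convex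
  combination of values of h on U, hence uniformly close to h x. Integrating against any
  \<nu> \<in> P(X) preserves this bound, and the finite sets of test functions together with the
  tolerances direct the net.\<close>

lemma compact_t2_bump_function:
  fixes y :: "'a::t2_space"
  assumes "compact (UNIV :: 'a set)" "open V" "y \<in> V"
  obtains u :: "'a \<Rightarrow> real" where "continuous_on UNIV u" "\<And>z. 0 \<le> u z" "u y = 1"
    "\<And>z. z \<notin> V \<Longrightarrow> u z = 0"
proof -
  have "Hausdorff_space (euclidean :: 'a topology)"
    unfolding Hausdorff_space_def by (simp add: separation_t2 disjnt_def)
  moreover have "compact_space (euclidean :: 'a topology)"
    using assms(1) by (simp add: compact_space_def)
  ultimately have "normal_space (euclidean :: 'a topology)"
    using compact_Hausdorff_or_regular_imp_normal_space by blast
  then obtain f where f: "continuous_map euclidean (top_of_set {0..1::real}) f"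
      "f ` (-V) \<subseteq> {0}" "f ` {y} \<subseteq> {1}"
    using Urysohn_lemma[of euclidean "-V" "{y}" 0 1] assms by (auto simp: disjnt_def closed_Compl)
  show ?thesis
  proof
    show "continuous_on UNIV f" using f(1)
      by (metis continuous_map_into_fulltopology continuous_map_iff_continuous subtopology_UNIV)
    show "0 \<le> f z" for z using f(1) by (auto simp: continuous_map_def)
  qed (use f in auto)
qed

lemma compact_t2_sqrt_partition_of_unity:
  fixes V :: "'a::t2_space \<Rightarrow> 'a set"
  assumes cpt: "compact (UNIV :: 'a set)" and V: "\<And>y. open (V y)" "\<And>y. y \<in> V y"
  obtains Y and f :: "'a \<Rightarrow> 'a \<Rightarrow> real"
  where "finite Y" "\<And>y. continuous_on UNIV (f y)" "\<And>y z. 0 \<le> f y z" "\<And>y. f y \<noteq> (\<lambda>_. 0)"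
    "\<And>y z. z \<notin> V y \<Longrightarrow> f y z = 0" "\<And>z. (\<Sum>y\<in>Y. (f y z)\<^sup>2) = 1"
proof -
  have "\<exists>u :: 'a \<Rightarrow> real. continuous_on UNIV u \<and> (\<forall>z. 0 \<le> u z) \<and> u y = 1 \<and>
      (\<forall>z. z \<notin> V y \<longrightarrow> u z = 0)" for y
    using compact_t2_bump_function[OF cpt V(1) V(2)] by metis
  then obtain u :: "'a \<Rightarrow> 'a \<Rightarrow> real" where u: "\<And>y. continuous_on UNIV (u y)"
    "\<And>y z. 0 \<le> u y z" "\<And>y. u y y = 1" "\<And>y z. z \<notin> V y \<Longrightarrow> u y z = 0"
    by metis
  have "UNIV \<subseteq> (\<Union>y. {z. 0 < u y z})"
  proof
    fix z :: 'a
    show "z \<in> (\<Union>y. {z. 0 < u y z})" using u(3)[of z] by (auto intro: exI[of _ z])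
  qed
  moreover have "open {z. 0 < u y z}" for y
    using u(1) by (intro open_Collect_less continuous_intros)
  ultimately obtain Y where Y: "finite Y" "UNIV \<subseteq> (\<Union>y\<in>Y. {z. 0 < u y z})"
    using compactE_image[OF cpt] by metis
  define S where "S z = (\<Sum>y\<in>Y. u y z)" for z
  have S_pos: "S z > 0" for z
  proof -
    obtain y where "y \<in> Y" "0 < u y z" using Y(2) by blast
    thus ?thesis unfolding S_def using Y(1) u(2) by (metis sum_pos2)
  qed
  have S_cont: "continuous_on UNIV S"
    unfolding S_def by (intro continuous_on_sum) (use u(1) in auto)
  define f where "f y z = sqrt (u y z / S z)" for y z
  have f_sq: "(f y z)\<^sup>2 = u y z / S z" for y z
    unfolding f_def using u(2)[of y z] S_pos[of z] by simp
  show ?thesis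
  proof
    show "continuous_on UNIV (f y)" for y
      unfolding f_def using S_pos
      by (intro continuous_intros u(1) S_cont) (auto simp: less_imp_neq[symmetric])
    show "f y \<noteq> (\<lambda>_. 0)" for y
    proof
      assume "f y = (\<lambda>_. 0)"
      hence "(f y y)\<^sup>2 = 0" by simp
      thus False using u(3)[of y] S_pos[of y] by (simp add: f_sq)
    qed
    show "(\<Sum>y\<in>Y. (f y z)\<^sup>2) = 1" for z
      unfolding f_sq using S_pos[of z] by (simp add: sum_divide_distrib[symmetric] S_def)
  qed (use Y(1) u S_pos in \<open>auto simp: f_def less_imp_le\<close>)
qed

lemma minimal_action_orbit_meets_open:
  assumes "minimal_action G \<phi>" "open U" "U \<noteq> {}"
  obtains g where "g \<in> carrier G" "\<phi> g y \<in> U"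
proof -
  have "\<not> orbit G \<phi> y \<subseteq> -U"
  proof
    assume "orbit G \<phi> y \<subseteq> -U"
    hence "closure (orbit G \<phi> y) \<subseteq> -U"
      using assms(2) by (simp add: closure_minimal closed_Compl)
    thus False using assms by (auto simp: minimal_action_def)
  qed
  thus ?thesis using that by (auto simp: orbit_def)
qed

lemma gen_apply_convex_bound:
  assumes "(\<Sum>(s, f) \<leftarrow> \<mu>. (f z)\<^sup>2) = 1"
    and "\<And>s f. (s, f) \<in> set \<mu> \<Longrightarrow> f z \<noteq> 0 \<Longrightarrow> \<bar>fun_act G \<phi> s h z - c\<bar> \<le> e"
    and "e \<ge> 0"
  shows "\<bar>gen_apply G \<phi> \<mu> h z - c\<bar> \<le> e"
proof -
  have weights: "(\<Sum>(s, f) \<leftarrow> \<mu>. (f z)\<^sup>2 * d) = d" for d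
    using assms(1) sum_list_mult_const[of "\<lambda>(s, f). (f z)\<^sup>2" d \<mu>] by (simp add: case_prod_unfold)
  have "gen_apply G \<phi> \<mu> h z - c = (\<Sum>(s, f) \<leftarrow> \<mu>. (f z)\<^sup>2 * (fun_act G \<phi> s h z - c))"
    using weights[of c] by (simp add: gen_apply_def right_diff_distrib sum_list_subtractf case_prod_unfold)
  also have "\<bar>\<dots>\<bar> \<le> (\<Sum>(s, f) \<leftarrow> \<mu>. \<bar>(f z)\<^sup>2 * (fun_act G \<phi> s h z - c)\<bar>)"
    using sum_list_abs[of "map (\<lambda>(s, f). (f z)\<^sup>2 * (fun_act G \<phi> s h z - c)) \<mu>"]
    by (simp add: comp_def case_prod_unfold)
  also have "\<dots> \<le> (\<Sum>(s, f) \<leftarrow> \<mu>. (f z)\<^sup>2 * e)"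
  proof (rule sum_list_mono, clarify)
    fix s f assume "(s, f) \<in> set \<mu>"
    thus "\<bar>(f z)\<^sup>2 * (fun_act G \<phi> s h z - c)\<bar> \<le> (f z)\<^sup>2 * e"
      using assms(2)[of s f] by (cases "f z = 0") (auto simp: abs_mult mult_left_mono)
  qed
  also have "\<dots> = e" by (rule weights)
  finally show ?thesis .
qed

lemma continuous_on_gen_apply:
  assumes "group G" "\<forall>g \<in> carrier G. continuous_on UNIV (\<phi> g)"
    and "continuous_on UNIV h"
    and "\<forall>(s, f) \<in> set \<mu>. s \<in> carrier G \<and> continuous_on UNIV f"
  shows "continuous_on UNIV (gen_apply G \<phi> \<mu> h)"
  unfolding gen_apply_def fun_act_def using assms(4)
proof (induction \<mu>)
  case (Cons p \<mu>)
  obtain s f where p: "p = (s, f)" by force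
  with Cons.prems have "s \<in> carrier G" "continuous_on UNIV f" by auto
  moreover from this have "continuous_on UNIV (\<lambda>y. h (\<phi> (inv\<^bsub>G\<^esub> s) y))"
    using assms(1-3) by (intro continuous_on_compose2[OF assms(3)]) (auto simp: group.inv_closed)
  ultimately show ?case
    using Cons by (auto simp: p intro!: continuous_intros)
qed simp

lemma exists_Pf_uniformly_near_point:
  fixes \<phi> :: "'g \<Rightarrow> 'a::t2_space \<Rightarrow> 'a"
  assumes grp: "group G" and cpt: "compact (UNIV :: 'a set)"
    and cont: "\<forall>g \<in> carrier G. continuous_on UNIV (\<phi> g)"
    and mini: "minimal_action G \<phi>"
    and H: "finite H" "\<forall>h\<in>H. continuous_on UNIV (h :: 'a \<Rightarrow> real)" and e: "e > 0"
  shows "\<exists>\<mu>\<in>Pf G. \<forall>h\<in>H. \<forall>z. \<bar>gen_apply G \<phi> \<mu> h z - h x\<bar> \<le> e"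
proof -
  define U where "U = (\<Inter>h\<in>H. {z. \<bar>h z - h x\<bar> < e})"
  have "open U"
    unfolding U_def using H
    by (intro open_INT) (auto intro!: open_Collect_less continuous_intros)
  moreover have "x \<in> U" using e by (auto simp: U_def)
  ultimately have "\<exists>g. g \<in> carrier G \<and> \<phi> g y \<in> U" for y
    using minimal_action_orbit_meets_open[OF mini] by blast
  then obtain g where g: "\<And>y. g y \<in> carrier G" "\<And>y. \<phi> (g y) y \<in> U"
    by metis
  define V where "V y = \<phi> (g y) -` U" for y
  have V_open: "open (V y)" for y
    using continuous_on_open_vimage[of UNIV "\<phi> (g y)"] cont g(1) \<open>open U\<close> by (auto simp: V_def)
  have V_mem: "y \<in> V y" for y using g(2) by (simp add: V_def)
  obtain Y and f :: "'a \<Rightarrow> 'a \<Rightarrow> real" where Y: "finite Y" and f: "\<And>y. continuous_on UNIV (f y)"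
    "\<And>y z. 0 \<le> f y z" "\<And>y. f y \<noteq> (\<lambda>_. 0)" "\<And>y z. z \<notin> V y \<Longrightarrow> f y z = 0"
    "\<And>z. (\<Sum>y\<in>Y. (f y z)\<^sup>2) = 1"
    using compact_t2_sqrt_partition_of_unity[OF cpt V_open V_mem] by blast
  obtain ys where ys: "set ys = Y" "distinct ys" using finite_distinct_list[OF Y] by blast
  define \<mu> where "\<mu> = map (\<lambda>y. (inv\<^bsub>G\<^esub> (g y), f y)) ys"
  have sq_sum: "(\<Sum>(s, f) \<leftarrow> \<mu>. (f z)\<^sup>2) = 1" for z
    using f(5)[of z] ys by (simp add: \<mu>_def sum_list_distinct_conv_sum_set comp_def)
  have "\<mu> \<in> Pf G"
    unfolding Pf_def
  proof (intro CollectI conjI ballI ext)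
    fix p assume "p \<in> set \<mu>"
    then obtain y where "p = (inv\<^bsub>G\<^esub> (g y), f y)" by (auto simp: \<mu>_def)
    thus "case p of (s, f) \<Rightarrow> s \<in> carrier G \<and> continuous_on UNIV f \<and> (\<forall>y. 0 \<le> f y) \<and> f \<noteq> (\<lambda>_. 0)"
      using f(1-3) g(1) grp by (simp add: group.inv_closed)
  qed (rule sq_sum)
  moreover have "\<bar>gen_apply G \<phi> \<mu> h z - h x\<bar> \<le> e" if "h \<in> H" for h z
  proof (rule gen_apply_convex_bound[OF sq_sum])
    fix s f' assume "(s, f') \<in> set \<mu>" "f' z \<noteq> 0"
    then obtain y where "s = inv\<^bsub>G\<^esub> (g y)" "f' = f y" "z \<in> V y"
      using f(4) by (auto simp: \<mu>_def)
    hence "\<phi> (g y) z \<in> U" "fun_act G \<phi> s h z = h (\<phi> (g y) z)"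
      using g(1) grp by (simp_all add: V_def fun_act_def group.inv_inv)
    thus "\<bar>fun_act G \<phi> s h z - h x\<bar> \<le> e"
      using that by (simp add: U_def less_imp_le)
  qed (use e in simp)
  ultimately show ?thesis by blast
qed

lemma integral_uniformly_near_const:
  fixes q :: "'a \<Rightarrow> real"
  assumes "prob_space M" "q \<in> borel_measurable M" "\<And>y. \<bar>q y - c\<bar> \<le> e"
  shows "\<bar>integral\<^sup>L M q - c\<bar> \<le> e"
proof -
  interpret prob_space M by fact
  have bound: "\<bar>q y\<bar> \<le> \<bar>c\<bar> + e" for y using assms(3)[of y] by linarith
  have q_int: "integrable M q"
    by (intro integrable_const_bound[where B="\<bar>c\<bar> + e"] AE_I2 assms(2)) (simp add: bound)
  have "integral\<^sup>L M q - c = integral\<^sup>L M (\<lambda>y. q y - c)"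
    using q_int by (simp add: prob_space)
  also have "\<bar>\<dots>\<bar> \<le> integral\<^sup>L M (\<lambda>y. \<bar>q y - c\<bar>)" by (rule integral_abs_bound)
  also have "\<dots> \<le> integral\<^sup>L M (\<lambda>y. e)"
    using q_int assms(3) by (intro integral_mono) auto
  also have "\<dots> = e" by (simp add: prob_space)
  finally show ?thesis .
qed

lemma tendsto_integral_uniform_approx:
  fixes q :: "'m \<Rightarrow> 'a::topological_space \<Rightarrow> real"
  assumes "prob_space M" "sets M = sets borel"
    and "eventually (\<lambda>\<mu>. continuous_on UNIV (q \<mu>)) F"
    and "\<And>e. e > 0 \<Longrightarrow> eventually (\<lambda>\<mu>. \<forall>z. \<bar>q \<mu> z - c\<bar> \<le> e) F"
  shows "((\<lambda>\<mu>. integral\<^sup>L M (q \<mu>)) \<longlongrightarrow> c) F"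
proof (rule tendstoI)
  fix e :: real assume "e > 0"
  hence "eventually (\<lambda>\<mu>. continuous_on UNIV (q \<mu>) \<and> (\<forall>z. \<bar>q \<mu> z - c\<bar> \<le> e/2)) F"
    using assms(3) assms(4)[of "e/2"] by (intro eventually_conj) simp_all
  then show "eventually (\<lambda>\<mu>. dist (integral\<^sup>L M (q \<mu>)) c < e) F"
  proof (rule eventually_mono, elim conjE)
    fix \<mu> assume cont: "continuous_on UNIV (q \<mu>)" and near: "\<forall>z. \<bar>q \<mu> z - c\<bar> \<le> e/2"
    have "q \<mu> \<in> borel_measurable M"
      unfolding measurable_cong_sets[OF assms(2) refl] using cont by (rule borel_measurable_continuous_onI)
    hence "\<bar>integral\<^sup>L M (q \<mu>) - c\<bar> \<le> e/2"
      by (rule integral_uniformly_near_const[OF assms(1)]) (use near in blast)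
    thus "dist (integral\<^sup>L M (q \<mu>)) c < e"
      using \<open>e > 0\<close> by (simp add: dist_real_def)
  qed
qed

lemma filter_from_finite_approximations:
  fixes a :: "'m \<Rightarrow> 'h \<Rightarrow> 'z \<Rightarrow> real" and b :: "'h \<Rightarrow> real"
  assumes approx: "\<And>H e. finite H \<Longrightarrow> H \<subseteq> C \<Longrightarrow> e > 0 \<Longrightarrow>
      \<exists>\<mu>\<in>S. \<forall>h\<in>H. \<forall>z. \<bar>a \<mu> h z - b h\<bar> \<le> e"
  obtains F where "F \<noteq> bot" "eventually (\<lambda>\<mu>. \<mu> \<in> S) F"
    "\<And>h e. h \<in> C \<Longrightarrow> e > 0 \<Longrightarrow> eventually (\<lambda>\<mu>. \<forall>z. \<bar>a \<mu> h z - b h\<bar> \<le> e) F"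
proof
  define I where "I = {(H, e). finite H \<and> H \<subseteq> C \<and> (e::real) > 0}"
  define A where "A = (\<lambda>(H, e). {\<mu>\<in>S. \<forall>h\<in>H. \<forall>z. \<bar>a \<mu> h z - b h\<bar> \<le> e})"
  define F where "F = (INF i\<in>I. principal (A i))"
  have directed: "\<exists>k\<in>I. principal (A k) \<le> inf (principal (A i)) (principal (A j))"
    if "i \<in> I" "j \<in> I" for i j
  proof -
    obtain H1 e1 H2 e2 where ij: "i = (H1, e1)" "j = (H2, e2)" by force
    have "(H1 \<union> H2, min e1 e2) \<in> I" "A (H1 \<union> H2, min e1 e2) \<subseteq> A i \<inter> A j"
      using that by (auto simp: I_def A_def ij)
    thus ?thesis by (auto simp: inf_principal)
  qed
  show "F \<noteq> bot"
  proof
    assume "F = bot"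
    then obtain i where "i \<in> I" "principal (A i) = bot"
      unfolding F_def using INF_filter_bot_base[OF directed] by blast
    moreover obtain H e where "i = (H, e)" by force
    ultimately have "finite H" "H \<subseteq> C" "e > 0" "A (H, e) = {}"
      by (auto simp: I_def principal_eq_bot_iff)
    thus False using approx[of H e] unfolding A_def by blast
  qed
  have "({}, 1) \<in> I" by (simp add: I_def)
  thus "eventually (\<lambda>\<mu>. \<mu> \<in> S) F"
    unfolding F_def by (rule eventually_INF1) (auto simp: A_def eventually_principal)
  show "eventually (\<lambda>\<mu>. \<forall>z. \<bar>a \<mu> h z - b h\<bar> \<le> e) F" if "h \<in> C" "e > 0" for h e
  proof -
    have "({h}, e) \<in> I" using that by (simp add: I_def)
    thus ?thesis
      unfolding F_def by (rule eventually_INF1) (auto simp: A_def eventually_principal)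
  qed
qed

theorem mainTheorem11:
  fixes G :: "('g, 'm) monoid_scheme"
    and \<phi> :: "'g \<Rightarrow> 'a::t2_space \<Rightarrow> 'a"
    and x :: 'a
  assumes "group G"
    and "countable (carrier G)"
    and "compact (UNIV :: 'a set)"
    and "group_action G UNIV \<phi>"
    and "\<forall>g \<in> carrier G. continuous_on UNIV (\<phi> g)"
    and "minimal_action G \<phi>"
  shows "\<exists>F :: ('g \<times> ('a \<Rightarrow> real)) list filter.
           F \<noteq> bot \<and> eventually (\<lambda>\<mu>. \<mu> \<in> Pf G) F \<and>
           (\<forall>\<nu>. regular_borel_prob \<nu> \<longrightarrow>
              (\<forall>h. continuous_on UNIV h \<longrightarrow>
                 ((\<lambda>\<mu>. integral\<^sup>L \<nu> (gen_apply G \<phi> \<mu> h)) \<longlongrightarrow> h x) F))"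
proof -
  have approx: "\<exists>\<mu>\<in>Pf G. \<forall>h\<in>H. \<forall>z. \<bar>gen_apply G \<phi> \<mu> h z - h x\<bar> \<le> e"
    if "finite H" "H \<subseteq> {h. continuous_on UNIV h}" "e > 0" for H :: "('a \<Rightarrow> real) set" and e :: real
    using exists_Pf_uniformly_near_point[OF assms(1,3,5,6)] that by blast
  obtain F :: "('g \<times> ('a \<Rightarrow> real)) list filter"
    where F: "F \<noteq> bot" "eventually (\<lambda>\<mu>. \<mu> \<in> Pf G) F"
      and near: "\<And>h e. h \<in> {h. continuous_on UNIV h} \<Longrightarrow> e > 0 \<Longrightarrow>
        eventually (\<lambda>\<mu>. \<forall>z. \<bar>gen_apply G \<phi> \<mu> h z - h x\<bar> \<le> e) F"
    using filter_from_finite_approximations[OF approx] by blast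
  have "((\<lambda>\<mu>. integral\<^sup>L \<nu> (gen_apply G \<phi> \<mu> h)) \<longlongrightarrow> h x) F"
    if \<nu>: "regular_borel_prob \<nu>" and h: "continuous_on UNIV h" for \<nu> h
  proof (rule tendsto_integral_uniform_approx)
    show "prob_space \<nu>" "sets \<nu> = sets borel" using \<nu> by (simp_all add: regular_borel_prob_def)
    show "eventually (\<lambda>\<mu>. continuous_on UNIV (gen_apply G \<phi> \<mu> h)) F"
      using F(2) by (rule eventually_mono)
        (rule continuous_on_gen_apply[OF assms(1,5) h], auto simp: Pf_def)
  qed (use near h in simp)
  thus ?thesis using F(1,2) by blast
qed

end
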